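(* Let $(X,\|\cdot\|)$ be a Banach space, $K\subset X$ a cone, $U$ a relatively open subset of $K$, and $T:\overline{U}\to K$ an operator (not necessarily continuous). Let $\mathbb{T}:\overline{U}\to 2^K$ be the closed--convex envelope of $T$. Then: 1. If $T$ maps bounded sets into relatively compact sets, then $\mathbb{T}$ has compact values and is upper semicontinuous. 2. If $T(\overline{U})$ is relatively compact, then $\mathbb{T}(\overline{U})=\bigcup_{x\in\overline U}\mathbb T x$ is relatively compact.
   Context: A cone in a Banach space $X$ is a closed convex set $K$ such that $\lambda x\in K$ for all $x\in K$, $\lambda\ge 0$, and such that $x\in K$, $-x\in K$ imply $x=0$. The closed--convex envelope of $T:\overline{U}\to K$ is the multivalued map $\mathbb{T}:\overline U\to 2^K$ given by $\mathbb{T}x=\bigcap_{\varepsilon>0}\overline{\mathrm{co}}\,T\big(\overline{B}_\varepsilon(x)\cap\overline{U}\big)$, where $\overline B_\varepsilon(x)$ is the closed ball of center $x$ and radius $\varepsilon$ and $\overline{\mathrm{co}}$ denotes the closed convex hull. *)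

theory Defs
  imports "HOL-Analysis.Analysis"
begin

definition is_cone :: "'a::real_normed_vector set \<Rightarrow> bool" where
  "is_cone K \<longleftrightarrow> closed K \<and> convex K \<and> (\<forall>x\<in>K. \<forall>c::real. c \<ge> 0 \<longrightarrow> c *\<^sub>R x \<in> K)
     \<and> (\<forall>x. x \<in> K \<and> -x \<in> K \<longrightarrow> x = 0)"

definition cc_envelope :: "('a::real_normed_vector \<Rightarrow> 'a) \<Rightarrow> 'a set \<Rightarrow> 'a \<Rightarrow> 'a set" where
  "cc_envelope T D x = (\<Inter>\<epsilon>\<in>{\<epsilon>::real. \<epsilon> > 0}. closure (convex hull (T ` (cball x \<epsilon> \<inter> D))))"

definition usc_on :: "'a::metric_space set \<Rightarrow> ('a \<Rightarrow> 'b::topological_space set) \<Rightarrow> bool" where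
  "usc_on D F \<longleftrightarrow> (\<forall>x\<in>D. \<forall>V. open V \<and> F x \<subseteq> V \<longrightarrow>
       (\<exists>\<delta>>0. \<forall>y\<in>D. dist y x < \<delta> \<longrightarrow> F y \<subseteq> V))"

definition rel_compact :: "'a::topological_space set \<Rightarrow> bool" where
  "rel_compact S \<longleftrightarrow> compact (closure S)"

end

(* Both parts rest on Mazur's theorem: in a Banach space the closed convex hull of a relatively
   compact set is compact. The envelope at x is the intersection of the nested sets
   closure (convex hull T(B_e(x) \<inter> D)), which are compact under the first hypothesis; hence
   any open V containing the envelope already contains one of them, say for radius e, and so
   contains the envelope at every y with dist y x < e/2, since B_{e/2}(y) \<subseteq> B_e(x). *)
theory Submission imports Defs begin

lemma closure_convex_hull_subset_sums_cball:
  fixes S k :: "'a::real_normed_vector set"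
  assumes "finite k" and "S \<subseteq> (\<Union>x\<in>k. ball x e)"
  shows "closure (convex hull S) \<subseteq> (\<Union>x\<in>convex hull k. \<Union>y\<in>cball 0 e. {x + y})"
proof (intro closure_minimal hull_minimal)
  show "convex (\<Union>x\<in>convex hull k. \<Union>y\<in>cball 0 e. {x + y})"
    by (intro convex_sums convex_convex_hull convex_cball)
  show "closed (\<Union>x\<in>convex hull k. \<Union>y\<in>cball 0 e. {x + y})"
    using assms(1) by (intro compact_closed_sums finite_imp_compact_convex_hull closed_cball)
  show "S \<subseteq> (\<Union>x\<in>convex hull k. \<Union>y\<in>cball 0 e. {x + y})"
  proof
    fix z assume "z \<in> S"
    then obtain x where "x \<in> k" "dist x z < e"
      using assms(2) by auto
    then have "x \<in> convex hull k" "z - x \<in> cball 0 e"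
      by (auto simp: hull_inc dist_norm norm_minus_commute)
    moreover have "z = x + (z - x)"
      by simp
    ultimately show "z \<in> (\<Union>x\<in>convex hull k. \<Union>y\<in>cball 0 e. {x + y})"
      by blast
  qed
qed

text \<open>The convex hull of a finite \<open>e/2\<close>-net of \<open>S\<close> is compact, hence has a
  finite \<open>e/2\<close>-net itself, and that is an \<open>e\<close>-net of the closed convex hull of \<open>S\<close>.\<close>
lemma compact_closure_convex_hull:
  fixes S :: "'a::banach set"
  assumes "compact (closure S)"
  shows "compact (closure (convex hull S))"
  unfolding compact_eq_totally_bounded
proof (intro conjI allI impI)
  show "complete (closure (convex hull S))"
    by (simp add: complete_eq_closed)
  fix e :: real assume "e > 0"
  then have "e/2 > 0"
    by simp
  then obtain k where k: "finite k" "closure S \<subseteq> (\<Union>x\<in>k. ball x (e/2))"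
    using assms unfolding compact_eq_totally_bounded by blast
  obtain l where l: "finite l" "convex hull k \<subseteq> (\<Union>x\<in>l. ball x (e/2))"
    using finite_imp_compact_convex_hull[OF k(1)] \<open>e/2 > 0\<close>
    unfolding compact_eq_totally_bounded by blast
  have "closure (convex hull S) \<subseteq> (\<Union>x\<in>convex hull k. \<Union>y\<in>cball 0 (e/2). {x + y})"
    using k(1) subset_trans[OF closure_subset k(2)] by (rule closure_convex_hull_subset_sums_cball)
  also have "\<dots> \<subseteq> (\<Union>x\<in>l. ball x e)"
  proof clarify
    fix c d assume c: "c \<in> convex hull k" and d: "d \<in> cball (0::'a) (e/2)"
    then obtain x where "x \<in> l" "dist x c < e/2"
      using l(2) by auto
    moreover have "dist x (c + d) \<le> dist x c + dist c (c + d)"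
      by (rule dist_triangle)
    moreover have "dist c (c + d) = norm d"
      by (simp add: dist_norm)
    ultimately show "c + d \<in> (\<Union>x\<in>l. ball x e)"
      using d by fastforce
  qed
  finally show "\<exists>l. finite l \<and> closure (convex hull S) \<subseteq> (\<Union>x\<in>l. ball x e)"
    using l(1) by blast
qed

lemma decreasing_compact_family_subset_open:
  fixes C :: "real \<Rightarrow> 'a::t2_space set"
  assumes mono: "\<And>e e'. 0 < e \<Longrightarrow> e \<le> e' \<Longrightarrow> C e \<subseteq> C e'"
    and compact: "\<And>e. 0 < e \<Longrightarrow> compact (C e)"
    and "open V" and Inter_subset: "(\<Inter>e\<in>{0<..}. C e) \<subseteq> V"
  shows "\<exists>e>0. C e \<subseteq> V"
proof (rule ccontr)
  assume not_subset: "\<not> (\<exists>e>0. C e \<subseteq> V)"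
  have "(C 1 - V) \<inter> (\<Inter>e\<in>{0<..}. C e) \<noteq> {}"
  proof (rule compact_imp_fip_image)
    show "compact (C 1 - V)"
      using compact \<open>open V\<close> by (intro compact_diff) auto
    show "closed (C e)" if "e \<in> {0<..}" for e
      using compact that by (simp add: compact_imp_closed)
    fix E :: "real set" assume E: "finite E" "E \<subseteq> {0<..}"
    define m where "m = Min (insert 1 E)"
    have "m > 0"
      using E by (auto simp: m_def Min_gr_iff)
    then obtain z where z: "z \<in> C m" "z \<notin> V"
      using not_subset by blast
    have "z \<in> C e" if "e \<in> insert 1 E" for e
      using mono[OF \<open>m > 0\<close>, of e] z(1) E(1) that by (auto simp: m_def)
    then show "(C 1 - V) \<inter> (\<Inter>e\<in>E. C e) \<noteq> {}"
      using z(2) by blast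
  qed
  then show False
    using Inter_subset by blast
qed

definition cc_hull_ball :: "('a::real_normed_vector \<Rightarrow> 'a) \<Rightarrow> 'a set \<Rightarrow> 'a \<Rightarrow> real \<Rightarrow> 'a set"
  where "cc_hull_ball T D x e = closure (convex hull (T ` (cball x e \<inter> D)))"

lemma cc_envelope_eq_INT_cc_hull_ball:
  "cc_envelope T D x = (\<Inter>e\<in>{0<..}. cc_hull_ball T D x e)"
  by (simp add: cc_envelope_def cc_hull_ball_def greaterThan_def)

lemma cc_hull_ball_mono:
  "cball x e \<subseteq> cball y e' \<Longrightarrow> cc_hull_ball T D x e \<subseteq> cc_hull_ball T D y e'"
  unfolding cc_hull_ball_def by (intro closure_mono hull_mono image_mono Int_mono) auto

lemma cc_envelope_subset_cc_hull_ball: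
  "e > 0 \<Longrightarrow> cc_envelope T D x \<subseteq> cc_hull_ball T D x e"
  unfolding cc_envelope_eq_INT_cc_hull_ball by auto

lemma cc_envelope_subset_closure_convex_hull_image:
  "cc_envelope T D x \<subseteq> closure (convex hull (T ` D))"
proof -
  have "cc_envelope T D x \<subseteq> cc_hull_ball T D x 1"
    by (simp add: cc_envelope_subset_cc_hull_ball)
  also have "\<dots> \<subseteq> closure (convex hull (T ` D))"
    unfolding cc_hull_ball_def by (intro closure_mono hull_mono image_mono) auto
  finally show ?thesis .
qed

lemma closed_cc_envelope: "closed (cc_envelope T D x)"
  unfolding cc_envelope_def by (intro closed_INT) simp

lemma compact_cc_hull_ball:
  fixes T :: "'a::banach \<Rightarrow> 'a"
  assumes "rel_compact (T ` (cball x e \<inter> D))"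
  shows "compact (cc_hull_ball T D x e)"
  using assms unfolding cc_hull_ball_def rel_compact_def by (rule compact_closure_convex_hull)

lemma compact_cc_envelope:
  fixes T :: "'a::banach \<Rightarrow> 'a"
  assumes "e > 0" and "rel_compact (T ` (cball x e \<inter> D))"
  shows "compact (cc_envelope T D x)"
proof -
  have "cc_hull_ball T D x e \<inter> cc_envelope T D x = cc_envelope T D x"
    using cc_envelope_subset_cc_hull_ball[OF assms(1)] by blast
  moreover have "compact (cc_hull_ball T D x e \<inter> cc_envelope T D x)"
    using compact_cc_hull_ball[OF assms(2)] closed_cc_envelope by (rule compact_Int_closed)
  ultimately show ?thesis
    by simp
qed

lemma usc_on_cc_envelope:
  fixes T :: "'a::banach \<Rightarrow> 'a"
  assumes local_rel_compact: "\<And>x e. x \<in> D \<Longrightarrow> e > 0 \<Longrightarrow> rel_compact (T ` (cball x e \<inter> D))"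
  shows "usc_on D (cc_envelope T D)"
  unfolding usc_on_def
proof (intro ballI allI impI)
  fix x V assume "x \<in> D" and V: "open V \<and> cc_envelope T D x \<subseteq> V"
  have "\<exists>e>0. cc_hull_ball T D x e \<subseteq> V"
  proof (rule decreasing_compact_family_subset_open)
    show "cc_hull_ball T D x e \<subseteq> cc_hull_ball T D x e'" if "e \<le> e'" for e e'
      using that by (intro cc_hull_ball_mono) auto
    show "compact (cc_hull_ball T D x e)" if "e > 0" for e
      using local_rel_compact[OF \<open>x \<in> D\<close> that] by (rule compact_cc_hull_ball)
  qed (use V in \<open>auto simp: cc_envelope_eq_INT_cc_hull_ball\<close>)
  then obtain e where "e > 0" and e: "cc_hull_ball T D x e \<subseteq> V"
    by blast
  show "\<exists>\<delta>>0. \<forall>y\<in>D. dist y x < \<delta> \<longrightarrow> cc_envelope T D y \<subseteq> V"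
  proof (intro exI[of _ "e/2"] conjI ballI impI)
    show "e/2 > 0"
      using \<open>e > 0\<close> by simp
    fix y assume "dist y x < e/2"
    have "cball y (e/2) \<subseteq> cball x e"
    proof
      fix z assume "z \<in> cball y (e/2)"
      then show "z \<in> cball x e"
        using dist_triangle[of x z y] \<open>dist y x < e/2\<close> by (simp add: dist_commute)
    qed
    then have "cc_envelope T D y \<subseteq> cc_hull_ball T D x e"
      using cc_envelope_subset_cc_hull_ball[of "e/2" T D y] cc_hull_ball_mono \<open>e > 0\<close>
      by (meson half_gt_zero order_trans)
    then show "cc_envelope T D y \<subseteq> V"
      using e by blast
  qed
qed

lemma rel_compact_UN_cc_envelope:
  fixes T :: "'a::banach \<Rightarrow> 'a"
  assumes "rel_compact (T ` D)"
  shows "rel_compact (\<Union>x\<in>D. cc_envelope T D x)"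
proof -
  have hull_compact: "compact (closure (convex hull (T ` D)))"
    using assms unfolding rel_compact_def by (rule compact_closure_convex_hull)
  have "closure (\<Union>x\<in>D. cc_envelope T D x) \<subseteq> closure (convex hull (T ` D))"
    by (intro closure_minimal UN_least cc_envelope_subset_closure_convex_hull_image) auto
  then show ?thesis
    unfolding rel_compact_def using hull_compact by (metis compact_Int_closed closed_closure inf.absorb2)
qed

theorem proposition1:
  fixes K U :: "'a::banach set" and T :: "'a \<Rightarrow> 'a"
  assumes "is_cone K"
    and "openin (top_of_set K) U"
    and "T ` closure U \<subseteq> K"
  shows "((\<forall>B. B \<subseteq> closure U \<and> bounded B \<longrightarrow> rel_compact (T ` B)) \<longrightarrow>
           (\<forall>x\<in>closure U. compact (cc_envelope T (closure U) x))
           \<and> usc_on (closure U) (cc_envelope T (closure U)))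
       \<and> (rel_compact (T ` closure U) \<longrightarrow>
           rel_compact (\<Union>x\<in>closure U. cc_envelope T (closure U) x))"
proof (intro conjI impI)
  assume "\<forall>B. B \<subseteq> closure U \<and> bounded B \<longrightarrow> rel_compact (T ` B)"
  then have local_rel_compact: "rel_compact (T ` (cball x e \<inter> closure U))" for x e
    by (meson Int_lower2 bounded_Int bounded_cball)
  then show "\<forall>x\<in>closure U. compact (cc_envelope T (closure U) x)"
    using compact_cc_envelope[OF zero_less_one] by blast
  show "usc_on (closure U) (cc_envelope T (closure U))"
    using local_rel_compact by (rule usc_on_cc_envelope)
next
  assume "rel_compact (T ` closure U)"
  then show "rel_compact (\<Union>x\<in>closure U. cc_envelope T (closure U) x)"
    by (rule rel_compact_UN_cc_envelope)
qed

end
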